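(* If $T$ is a tree with $n$ vertices, then $\nu^*(P_n)\le \nu^*(T)\le \nu^*(K_{1,n-1})$.
   Context: For a finite simple graph $G=(V,E)$ with $\ell=|V|+|E|$, a construction sequence (c-sequence) is a bijection $x:\{1,\dots,\ell\}\to V\sqcup E$ such that every edge $e=uw$ satisfies $x^{-1}(e)>\max\{x^{-1}(u),x^{-1}(w)\}$. The cost of $x$ is $\nu(x)=\sum_{e=uw\in E}\big(2x^{-1}(e)-x^{-1}(u)-x^{-1}(w)\big)$, and $\nu^*(G)$ is the maximum of $\nu(x)$ over all c-sequences for $G$. $P_n$ is the path on $n$ vertices and $K_{1,n-1}$ is the star with a hub adjacent to $n-1$ leaves. *)

theory Defs
  imports Main
begin

definition simple_graph :: "'a set \<Rightarrow> 'a set set \<Rightarrow> bool" where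
  "simple_graph V E \<longleftrightarrow> finite V \<and> (\<forall>e\<in>E. \<exists>u w. e = {u, w} \<and> u \<in> V \<and> w \<in> V \<and> u \<noteq> w)"

definition adj :: "'a set set \<Rightarrow> 'a \<Rightarrow> 'a \<Rightarrow> bool" where
  "adj E u w \<longleftrightarrow> {u, w} \<in> E"

definition connected_graph :: "'a set \<Rightarrow> 'a set set \<Rightarrow> bool" where
  "connected_graph V E \<longleftrightarrow> V \<noteq> {} \<and> (\<forall>u\<in>V. \<forall>w\<in>V. (adj E)\<^sup>*\<^sup>* u w)"

definition is_cycle :: "'a set \<Rightarrow> 'a set set \<Rightarrow> 'a list \<Rightarrow> bool" where
  "is_cycle V E cs \<longleftrightarrow> length cs \<ge> 3 \<and> distinct cs \<and> set cs \<subseteq> V \<and>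
     (\<forall>i. Suc i < length cs \<longrightarrow> adj E (cs ! i) (cs ! Suc i)) \<and>
     adj E (last cs) (hd cs)"

definition acyclic_graph :: "'a set \<Rightarrow> 'a set set \<Rightarrow> bool" where
  "acyclic_graph V E \<longleftrightarrow> (\<nexists>cs. is_cycle V E cs)"

definition is_tree :: "'a set \<Rightarrow> 'a set set \<Rightarrow> bool" where
  "is_tree V E \<longleftrightarrow> simple_graph V E \<and> connected_graph V E \<and> acyclic_graph V E"

text \<open>Construction sequences: x is a bijection from {1..|V|+|E|} onto V \<squnion> E
  (vertices tagged Inl, edges tagged Inr) such that each edge comes after both endpoints.\<close>
definition c_seq :: "'a set \<Rightarrow> 'a set set \<Rightarrow> (nat \<Rightarrow> 'a + 'a set) \<Rightarrow> bool" where
  "c_seq V E x \<longleftrightarrow> bij_betw x {1..card V + card E} (Inl ` V \<union> Inr ` E) \<and>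
     (\<forall>u w. {u, w} \<in> E \<longrightarrow>
        inv_into {1..card V + card E} x (Inr {u, w}) > max (inv_into {1..card V + card E} x (Inl u))
                                                          (inv_into {1..card V + card E} x (Inl w)))"

definition cost :: "'a set \<Rightarrow> 'a set set \<Rightarrow> (nat \<Rightarrow> 'a + 'a set) \<Rightarrow> int" where
  "cost V E x = (let p = inv_into {1..card V + card E} x in
     (\<Sum>e\<in>E. 2 * int (p (Inr e)) - (\<Sum>v\<in>e. int (p (Inl v)))))"

definition nu_star :: "'a set \<Rightarrow> 'a set set \<Rightarrow> int" where
  "nu_star V E = Max {cost V E x | x. c_seq V E x}"

definition path_edges :: "nat \<Rightarrow> nat set set" where
  "path_edges n = {{i, Suc i} | i. Suc i < n}"

definition star_edges :: "nat \<Rightarrow> nat set set" where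
  "star_edges n = {{0, i} | i. 1 \<le> i \<and> i < n}"

end

theory Submission
  imports Defs "HOL.Inequalities"
begin

text \<open>
  Write p for the position map of a c-sequence of a graph with L = |V| + |E|. All positions
  together sum to L(L+1)/2, and counting each vertex once per incident edge turns the cost into
  \<nu>(x) = L(L+1) - \<Sum>v (deg v + 2) p(v): only the positions of the vertices matter, and
  any injective placement of the vertices in front of the edges is realised by a c-sequence.
  For a tree on n \<ge> 2 vertices L = 2n - 1 and deg v \<ge> 1, so the subtracted sum splits as
  3 \<Sum>v p(v) + \<Sum>v (deg v - 1) p(v), with 2 \<Sum>v p(v) \<ge> n(n+1) and
  \<Sum>v (deg v - 1) p(v) \<ge> \<Sum>v (deg v - 1) = n - 2; the star attains both bounds by
  placing its hub first. For the path, the n - 2 inner vertices alone force the second sum up to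
  (n-2)(n-1)/2, and every tree attains this value: put its vertices first, two leaves last and
  the others in decreasing order of degree (Chebyshev's sum inequality).
\<close>

definition deg :: "'a set set \<Rightarrow> 'a \<Rightarrow> nat" where
  "deg E v = card {e\<in>E. v \<in> e}"

lemma simple_graph_edgeE:
  assumes "simple_graph V E" "e \<in> E"
  obtains u w where "e = {u, w}" "u \<in> V" "w \<in> V" "u \<noteq> w"
  using assms unfolding simple_graph_def by blast

lemma simple_graph_edge_subset: "simple_graph V E \<Longrightarrow> e \<in> E \<Longrightarrow> e \<subseteq> V"
  by (auto elim: simple_graph_edgeE)

lemma simple_graph_finite_vertices: "simple_graph V E \<Longrightarrow> finite V"
  by (simp add: simple_graph_def)

lemma simple_graph_finite_edges: "simple_graph V E \<Longrightarrow> finite E"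
  using finite_subset[of E "Pow V"] simple_graph_edge_subset simple_graph_finite_vertices
  by blast

lemma simple_graph_card_edge: "simple_graph V E \<Longrightarrow> e \<in> E \<Longrightarrow> card e = 2"
  by (auto elim: simple_graph_edgeE)

lemma deg_ge_1: "finite E \<Longrightarrow> e \<in> E \<Longrightarrow> v \<in> e \<Longrightarrow> 1 \<le> deg E v"
  using card_gt_0_iff[of "{e\<in>E. v \<in> e}"] by (auto simp: deg_def)

lemma sum_edges_endpoints:
  fixes f :: "'a \<Rightarrow> 'b::comm_semiring_1"
  assumes "simple_graph V E"
  shows "(\<Sum>e\<in>E. \<Sum>v\<in>e. f v) = (\<Sum>v\<in>V. of_nat (deg E v) * f v)"
proof -
  have fV: "finite V" and fE: "finite E"
    using assms simple_graph_finite_vertices simple_graph_finite_edges by auto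
  have "(\<Sum>e\<in>E. \<Sum>v\<in>e. f v) = (\<Sum>e\<in>E. \<Sum>v\<in>V. if v \<in> e then f v else 0)"
  proof (rule sum.cong[OF refl])
    fix e assume "e \<in> E"
    then have "{v\<in>V. v \<in> e} = e" using simple_graph_edge_subset[OF assms] by blast
    then show "(\<Sum>v\<in>e. f v) = (\<Sum>v\<in>V. if v \<in> e then f v else 0)"
      using sum.inter_filter[OF fV, of f "\<lambda>v. v \<in> e"] by simp
  qed
  also have "\<dots> = (\<Sum>v\<in>V. \<Sum>e\<in>E. if v \<in> e then f v else 0)"
    by (rule sum.swap)
  also have "\<dots> = (\<Sum>v\<in>V. of_nat (deg E v) * f v)"
  proof (rule sum.cong[OF refl])
    fix v
    show "(\<Sum>e\<in>E. if v \<in> e then f v else 0) = of_nat (deg E v) * f v"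
      using sum.inter_filter[OF fE, of "\<lambda>_. f v" "\<lambda>e. v \<in> e"] by (simp add: deg_def)
  qed
  finally show ?thesis .
qed

lemma sum_deg:
  assumes "simple_graph V E"
  shows "(\<Sum>v\<in>V. deg E v) = 2 * card E"
proof -
  have "(\<Sum>v\<in>V. deg E v) = (\<Sum>e\<in>E. \<Sum>v\<in>e. 1)"
    using sum_edges_endpoints[OF assms, of "\<lambda>_. 1::nat"] by simp
  also have "\<dots> = (\<Sum>e\<in>E. 2)"
    using simple_graph_card_edge[OF assms] by (intro sum.cong) auto
  finally show ?thesis by simp
qed

lemma sum_deg_minus_1:
  assumes "simple_graph V E" "\<forall>v\<in>V. 1 \<le> deg E v"
  shows "(\<Sum>v\<in>V. deg E v - 1) = 2 * card E - card V"
proof -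
  have "(\<Sum>v\<in>V. deg E v) = (\<Sum>v\<in>V. (deg E v - 1) + 1)"
    using assms(2) by (intro sum.cong) auto
  also have "\<dots> = (\<Sum>v\<in>V. deg E v - 1) + card V"
    by (subst sum.distrib) simp
  finally show ?thesis
    using sum_deg[OF assms(1)] by linarith
qed

lemma card_mul_Suc_le_twice_sum:
  fixes S :: "nat set"
  assumes "finite S" "0 \<notin> S"
  shows "card S * Suc (card S) \<le> 2 * \<Sum>S"
  using assms
proof (induction "card S" arbitrary: S)
  case 0
  then show ?case by simp
next
  case (Suc k)
  define m where "m = Max S"
  have m: "m \<in> S" unfolding m_def using Suc.hyps(2) Suc.prems(1) by (intro Max_in) auto
  have "S \<subseteq> {1..m}"
    using Suc.prems Max_ge unfolding m_def by (fastforce simp: Suc_le_eq gr0I)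
  then have "card S \<le> m" using card_mono[of "{1..m}" S] by simp
  have "card (S - {m}) = k" using Suc.hyps(2) Suc.prems(1) m by simp
  then have "k * Suc k \<le> 2 * \<Sum>(S - {m})"
    using Suc.hyps(1)[of "S - {m}"] Suc.prems by simp
  moreover have "\<Sum>S = m + \<Sum>(S - {m})"
    using sum.remove[OF Suc.prems(1) m, of "\<lambda>x. x"] by simp
  moreover have "card S * Suc (card S) = k * Suc k + 2 * card S"
    using Suc.hyps(2)[symmetric] by simp
  ultimately show ?case
    using \<open>card S \<le> m\<close> by linarith
qed

lemma double_sum_Suc_lessThan: "2 * (\<Sum>j<n. Suc j) = n * Suc n"
  by (induction n) auto

lemma sum_nth_positions:
  assumes "distinct vs" "\<And>j. j < length vs \<Longrightarrow> q (vs ! j) = Suc j"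
  shows "(\<Sum>v\<in>set vs. f v * q v) = (\<Sum>j<length vs. f (vs ! j) * Suc j)"
  using sum.reindex_bij_betw[OF bij_betw_nth[OF assms(1) refl refl], of "\<lambda>v. f v * q v"] assms(2)
  by simp

lemma exists_ordering_chebyshev:
  fixes c :: "'a \<Rightarrow> nat"
  assumes "finite A"
  obtains ws where "distinct ws" "set ws = A"
    "2 * (\<Sum>j<length ws. c (ws ! j) * Suc j) \<le> (\<Sum>v\<in>A. c v) * Suc (card A)"
proof -
  obtain xs where xs: "distinct xs" "set xs = A"
    using finite_distinct_list[OF assms] by blast
  define ws where "ws = rev (sort_key c xs)"
  define m where "m = length ws"
  have ws: "distinct ws" "set ws = A" using xs by (simp_all add: ws_def)
  have m: "m = card A" using distinct_card[OF ws(1)] ws(2) by (simp add: m_def)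
  have "c (ws ! j) \<le> c (ws ! i)" if "i \<le> j" "j < m" for i j
    using sorted_nth_mono[OF sorted_sort_key[of c xs], of "m - Suc j" "m - Suc i"] that
    by (simp add: ws_def m_def rev_nth)
  then have "m * (\<Sum>j=0..<m. Suc j * c (ws ! j)) \<le> (\<Sum>j=0..<m. Suc j) * (\<Sum>j=0..<m. c (ws ! j))"
    by (intro Chebyshev_sum_upper_nat) auto
  also have "(\<Sum>j=0..<m. c (ws ! j)) = (\<Sum>v\<in>A. c v)"
    using sum.reindex_bij_betw[OF bij_betw_nth[OF ws(1) refl ws(2)[symmetric]], of c]
    by (simp add: m_def atLeast0LessThan)
  finally have "m * (\<Sum>j<m. c (ws ! j) * Suc j) \<le> (\<Sum>j<m. Suc j) * (\<Sum>v\<in>A. c v)"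
    by (simp add: atLeast0LessThan mult.commute)
  then have "m * (2 * (\<Sum>j<m. c (ws ! j) * Suc j)) \<le> (2 * (\<Sum>j<m. Suc j)) * (\<Sum>v\<in>A. c v)"
    by (simp add: ac_simps)
  also have "\<dots> = m * ((\<Sum>v\<in>A. c v) * Suc m)"
    unfolding double_sum_Suc_lessThan by (simp add: algebra_simps)
  finally have "m * (2 * (\<Sum>j<m. c (ws ! j) * Suc j)) \<le> m * ((\<Sum>v\<in>A. c v) * Suc m)" .
  then have "2 * (\<Sum>j<m. c (ws ! j) * Suc j) \<le> (\<Sum>v\<in>A. c v) * Suc m"
    by (cases "m = 0") auto
  then show ?thesis using that ws m by (simp add: m_def)
qed

section \<open>Cost as a function of the vertex positions\<close>

abbreviation pos :: "'a set \<Rightarrow> 'a set set \<Rightarrow> (nat \<Rightarrow> 'a + 'a set) \<Rightarrow> 'a + 'a set \<Rightarrow> nat" where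
  "pos V E x \<equiv> inv_into {1..card V + card E} x"

lemma c_seq_pos_bij:
  "c_seq V E x \<Longrightarrow> bij_betw (pos V E x) (Inl ` V \<union> Inr ` E) {1..card V + card E}"
  by (simp add: c_seq_def bij_betw_inv_into)

lemma c_seq_vertex_pos: "c_seq V E x \<Longrightarrow> v \<in> V \<Longrightarrow> pos V E x (Inl v) \<in> {1..card V + card E}"
  using c_seq_pos_bij bij_betwE by blast

lemma c_seq_inj_vertex_pos: "c_seq V E x \<Longrightarrow> inj_on (\<lambda>v. pos V E x (Inl v)) V"
  using c_seq_pos_bij[of V E x] unfolding bij_betw_def inj_on_def by blast

lemma sum_pos:
  assumes "simple_graph V E" "c_seq V E x"
  shows "2 * ((\<Sum>v\<in>V. pos V E x (Inl v)) + (\<Sum>e\<in>E. pos V E x (Inr e)))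
     = (card V + card E) * Suc (card V + card E)"
proof -
  have fV: "finite V" and fE: "finite E"
    using assms simple_graph_finite_vertices simple_graph_finite_edges by auto
  have "(\<Sum>v\<in>V. pos V E x (Inl v)) + (\<Sum>e\<in>E. pos V E x (Inr e))
      = (\<Sum>z\<in>Inl ` V. pos V E x z) + (\<Sum>z\<in>Inr ` E. pos V E x z)"
    by (simp add: sum.reindex)
  also have "\<dots> = (\<Sum>z\<in>Inl ` V \<union> Inr ` E. pos V E x z)"
    by (rule sum.union_disjoint[symmetric]) (use fV fE in auto)
  also have "\<dots> = (\<Sum>i\<in>{1..card V + card E}. i)"
    using sum.reindex_bij_betw[OF c_seq_pos_bij[OF assms(2)], of "\<lambda>i. i"] by simp
  finally show ?thesis
    using gauss_sum_from_Suc_0[of "card V + card E", where ?'a = nat] by simp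
qed

definition vertex_load :: "'a set \<Rightarrow> 'a set set \<Rightarrow> (nat \<Rightarrow> 'a + 'a set) \<Rightarrow> nat" where
  "vertex_load V E x = (\<Sum>v\<in>V. (deg E v + 2) * pos V E x (Inl v))"

lemma cost_eq_vertex_load:
  assumes "simple_graph V E" "c_seq V E x"
  shows "cost V E x = int ((card V + card E) * Suc (card V + card E)) - int (vertex_load V E x)"
proof -
  let ?p = "pos V E x"
  have "cost V E x = 2 * (\<Sum>e\<in>E. int (?p (Inr e))) - (\<Sum>e\<in>E. \<Sum>v\<in>e. int (?p (Inl v)))"
    by (simp add: cost_def Let_def sum_subtractf sum_distrib_left)
  also have "(\<Sum>e\<in>E. \<Sum>v\<in>e. int (?p (Inl v))) = (\<Sum>v\<in>V. int (deg E v) * int (?p (Inl v)))"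
    by (rule sum_edges_endpoints[OF assms(1)])
  finally have "cost V E x
      = 2 * (\<Sum>e\<in>E. int (?p (Inr e))) - (\<Sum>v\<in>V. int (deg E v) * int (?p (Inl v)))" .
  moreover have "int (vertex_load V E x)
      = (\<Sum>v\<in>V. int (deg E v) * int (?p (Inl v))) + 2 * (\<Sum>v\<in>V. int (?p (Inl v)))"
    by (simp add: vertex_load_def algebra_simps sum.distrib sum_distrib_left)
  moreover have "2 * ((\<Sum>v\<in>V. int (?p (Inl v))) + (\<Sum>e\<in>E. int (?p (Inr e))))
      = int ((card V + card E) * Suc (card V + card E))"
    using arg_cong[OF sum_pos[OF assms], of int] by simp
  ultimately show ?thesis by (simp add: algebra_simps)
qed

lemma vertex_load_le:
  "c_seq V E x \<Longrightarrow> vertex_load V E x \<le> (\<Sum>v\<in>V. deg E v + 2) * (card V + card E)"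
  unfolding vertex_load_def sum_distrib_right
  by (intro sum_mono mult_le_mono2) (auto dest: c_seq_vertex_pos)

lemma finite_costs: "simple_graph V E \<Longrightarrow> finite {cost V E x | x. c_seq V E x}"
proof -
  assume sg: "simple_graph V E"
  let ?M = "(card V + card E) * Suc (card V + card E)"
  let ?B = "(\<Sum>v\<in>V. deg E v + 2) * (card V + card E)"
  have "cost V E x \<in> {int ?M - int ?B .. int ?M}" if "c_seq V E x" for x
    using cost_eq_vertex_load[OF sg that] vertex_load_le[OF that]
    by (simp only: atLeastAtMost_iff) linarith
  then have "{cost V E x | x. c_seq V E x} \<subseteq> {int ?M - int ?B .. int ?M}"
    by blast
  then show ?thesis by (rule finite_subset) simp
qed

lemma bij_betw_nth_pred:
  assumes "distinct zs"
  shows "bij_betw (\<lambda>i. zs ! (i - 1)) {1..length zs} (set zs)"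
proof -
  have "bij_betw (\<lambda>i. i - 1) {1..length zs} {..<length zs}"
    by (rule bij_betw_byWitness[where f' = Suc]) auto
  from bij_betw_trans[OF this bij_betw_nth[OF assms refl refl]] show ?thesis
    by (simp add: comp_def)
qed

lemma inv_into_nth_pred:
  "distinct zs \<Longrightarrow> k < length zs \<Longrightarrow> inv_into {1..length zs} (\<lambda>i. zs ! (i - 1)) (zs ! k) = Suc k"
  using bij_betw_inv_into_left[OF bij_betw_nth_pred, of zs "Suc k"] by simp

lemma vertices_first_c_seq:
  assumes sg: "simple_graph V E" and vs: "distinct vs" "set vs = V"
  obtains x where "c_seq V E x" "\<And>j. j < length vs \<Longrightarrow> pos V E x (Inl (vs ! j)) = Suc j"
proof -
  obtain es where es: "distinct es" "set es = E"
    using finite_distinct_list[OF simple_graph_finite_edges[OF sg]] by blast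
  define zs where "zs = map Inl vs @ map Inr es"
  define x where "x = (\<lambda>i. zs ! (i - 1))"
  have dz: "distinct zs" and sz: "set zs = Inl ` V \<union> Inr ` E"
    using vs es by (auto simp: zs_def distinct_map)
  have "length vs = card V" "length es = card E"
    using distinct_card vs es by metis+
  then have lz: "length zs = card V + card E" by (simp add: zs_def)
  have pz: "inv_into {1..length zs} x (zs ! k) = Suc k" if "k < length zs" for k
    unfolding x_def using inv_into_nth_pred[OF dz that] .
  have pv: "pos V E x (Inl (vs ! j)) = Suc j" if "j < length vs" for j
    using pz[of j] that lz by (simp add: zs_def nth_append)
  have pe: "pos V E x (Inr (es ! k)) = Suc (length vs + k)" if "k < length es" for k
    using pz[of "length vs + k"] that lz by (simp add: zs_def nth_append)
  have edge_after: "pos V E x (Inl u) < pos V E x (Inr {u, w})" if uw: "{u, w} \<in> E" for u w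
  proof -
    have "u \<in> V" using simple_graph_edge_subset[OF sg uw] by blast
    then obtain a where a: "a < length vs" "vs ! a = u"
      using vs(2) by (auto simp: in_set_conv_nth)
    obtain k where k: "k < length es" "es ! k = {u, w}"
      using uw es(2) by (auto simp: in_set_conv_nth)
    show ?thesis using pv[OF a(1)] pe[OF k(1)] a k by simp
  qed
  have "c_seq V E x"
    unfolding c_seq_def
  proof (intro conjI allI impI)
    show "bij_betw x {1..card V + card E} (Inl ` V \<union> Inr ` E)"
      using bij_betw_nth_pred[OF dz] sz lz by (simp add: x_def)
    fix u w assume "{u, w} \<in> E"
    then show "max (pos V E x (Inl u)) (pos V E x (Inl w)) < pos V E x (Inr {u, w})"
      using edge_after[of u w] edge_after[of w u] by (simp add: insert_commute)
  qed
  with pv show ?thesis using that by blast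
qed

lemma c_seq_exists:
  assumes "simple_graph V E"
  shows "\<exists>x. c_seq V E x"
proof -
  obtain vs where "distinct vs" "set vs = V"
    using finite_distinct_list[OF simple_graph_finite_vertices[OF assms]] by blast
  from vertices_first_c_seq[OF assms this] show ?thesis by blast
qed

lemma cost_le_nu_star: "simple_graph V E \<Longrightarrow> c_seq V E x \<Longrightarrow> cost V E x \<le> nu_star V E"
  unfolding nu_star_def by (rule Max_ge[OF finite_costs]) blast+

lemma nu_star_le:
  "simple_graph V E \<Longrightarrow> (\<And>x. c_seq V E x \<Longrightarrow> cost V E x \<le> b) \<Longrightarrow> nu_star V E \<le> b"
  unfolding nu_star_def using finite_costs[of V E] c_seq_exists[of V E]
  by (auto intro!: Max.boundedI)

lemma nu_star_no_edges:
  assumes "simple_graph V {}"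
  shows "nu_star V {} = 0"
proof -
  have cost: "cost V {} x = 0" for x by (simp add: cost_def)
  obtain x where "c_seq V {} x" using c_seq_exists[OF assms] by blast
  then have "0 \<le> nu_star V {}" using cost_le_nu_star[OF assms] cost by metis
  moreover have "nu_star V {} \<le> 0" using nu_star_le[OF assms] cost by simp
  ultimately show ?thesis by simp
qed

lemma nu_star_le_by_vertex_load:
  assumes sg: "simple_graph V E" and sg': "simple_graph V' E'"
    and size: "card V + card E = card V' + card E'"
    and lower: "\<And>x. c_seq V E x \<Longrightarrow> B \<le> 2 * vertex_load V E x"
    and x': "c_seq V' E' x'" and upper: "2 * vertex_load V' E' x' \<le> B"
  shows "nu_star V E \<le> nu_star V' E'"
proof -
  have "nu_star V E \<le> cost V' E' x'"
  proof (rule nu_star_le[OF sg])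
    fix x assume "c_seq V E x"
    then show "cost V E x \<le> cost V' E' x'"
      using lower upper size cost_eq_vertex_load[OF sg] cost_eq_vertex_load[OF sg' x'] by force
  qed
  also have "\<dots> \<le> nu_star V' E'" by (rule cost_le_nu_star[OF sg' x'])
  finally show ?thesis .
qed

lemma c_seq_twice_sum_vertex_pos_ge:
  assumes "c_seq V E x" "finite A" "A \<subseteq> V"
  shows "card A * Suc (card A) \<le> 2 * (\<Sum>v\<in>A. pos V E x (Inl v))"
proof -
  let ?q = "\<lambda>v. pos V E x (Inl v)"
  have inj: "inj_on ?q A"
    using inj_on_subset[OF c_seq_inj_vertex_pos[OF assms(1)] assms(3)] .
  have "0 \<notin> ?q ` A"
    using c_seq_vertex_pos[OF assms(1)] assms(3) by fastforce
  moreover have "\<Sum>(?q ` A) = (\<Sum>v\<in>A. ?q v)"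
    using sum.reindex[OF inj, of "\<lambda>i. i"] by simp
  ultimately show ?thesis
    using card_mul_Suc_le_twice_sum[of "?q ` A"] assms(2) card_image[OF inj] by simp
qed

lemma vertex_load_split:
  assumes "\<forall>v\<in>V. 1 \<le> deg E v"
  shows "vertex_load V E x
    = 3 * (\<Sum>v\<in>V. pos V E x (Inl v)) + (\<Sum>v\<in>V. (deg E v - 1) * pos V E x (Inl v))"
  unfolding vertex_load_def sum_distrib_left sum.distrib[symmetric]
  using assms by (intro sum.cong) (auto simp: algebra_simps diff_mult_distrib)

lemma vertex_load_vertices_first:
  assumes deg: "\<forall>v\<in>V. 1 \<le> deg E v" and vs: "distinct vs" "set vs = V"
    and px: "\<And>j. j < length vs \<Longrightarrow> pos V E x (Inl (vs ! j)) = Suc j"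
  shows "2 * vertex_load V E x
    = 3 * (card V * Suc (card V)) + 2 * (\<Sum>j<length vs. (deg E (vs ! j) - 1) * Suc j)"
proof -
  have "2 * (\<Sum>v\<in>V. pos V E x (Inl v)) = card V * Suc (card V)"
    using sum_nth_positions[OF vs(1) px, of "\<lambda>_. 1"] double_sum_Suc_lessThan
      distinct_card[OF vs(1)] vs(2) by simp
  moreover have "(\<Sum>v\<in>V. (deg E v - 1) * pos V E x (Inl v))
      = (\<Sum>j<length vs. (deg E (vs ! j) - 1) * Suc j)"
    using sum_nth_positions[OF vs(1) px] vs(2) by simp
  ultimately show ?thesis using vertex_load_split[OF deg, of x] by linarith
qed

lemma vertex_load_lower_bound:
  assumes sg: "simple_graph V E" and x: "c_seq V E x" and deg: "\<forall>v\<in>V. 1 \<le> deg E v"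
  shows "3 * (card V * Suc (card V)) + 2 * (2 * card E - card V) \<le> 2 * vertex_load V E x"
proof -
  have "card V * Suc (card V) \<le> 2 * (\<Sum>v\<in>V. pos V E x (Inl v))"
    using c_seq_twice_sum_vertex_pos_ge[OF x simple_graph_finite_vertices[OF sg]] by simp
  moreover have "2 * card E - card V \<le> (\<Sum>v\<in>V. (deg E v - 1) * pos V E x (Inl v))"
    unfolding sum_deg_minus_1[OF sg deg, symmetric]
    using c_seq_vertex_pos[OF x] by (intro sum_mono) simp
  ultimately show ?thesis
    using vertex_load_split[OF deg, of x] by linarith
qed

section \<open>Trees\<close>

definition simple_path :: "'a set set \<Rightarrow> 'a list \<Rightarrow> bool" where
  "simple_path E xs \<longleftrightarrow> distinct xs \<and> (\<forall>i. Suc i < length xs \<longrightarrow> adj E (xs ! i) (xs ! Suc i))"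

lemma simple_path_Cons:
  "simple_path E xs \<Longrightarrow> w \<notin> set xs \<Longrightarrow> adj E w (hd xs) \<Longrightarrow> simple_path E (w # xs)"
  unfolding simple_path_def by (auto simp: nth_Cons hd_conv_nth split: nat.split)

lemma simple_path_close_cycle:
  assumes "simple_path E xs" "set xs \<subseteq> V" "2 \<le> j" "j < length xs" "adj E (xs ! j) (xs ! 0)"
  shows "is_cycle V E (take (Suc j) xs)"
proof -
  have "last (take (Suc j) xs) = xs ! j"
    using assms(4) by (simp add: take_Suc_conv_app_nth)
  moreover have "hd (take (Suc j) xs) = xs ! 0"
    using assms(4) by (cases xs) auto
  ultimately show ?thesis
    using assms set_take_subset[of "Suc j" xs] by (auto simp: is_cycle_def simple_path_def)
qed

lemma symp_adj: "symp (adj E)"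
  by (auto intro: sympI simp: adj_def insert_commute)

lemma is_cycle_mono: "is_cycle V' E' cs \<Longrightarrow> V' \<subseteq> V \<Longrightarrow> E' \<subseteq> E \<Longrightarrow> is_cycle V E cs"
  unfolding is_cycle_def adj_def by (meson order.trans subsetD)

lemma longest_simple_path:
  assumes "finite V" "simple_path E ys0" "set ys0 \<subseteq> V"
  obtains xs where "simple_path E xs" "set xs \<subseteq> V"
    "\<And>ys. simple_path E ys \<Longrightarrow> set ys \<subseteq> V \<Longrightarrow> length ys \<le> length xs"
proof -
  let ?P = "\<lambda>xs. simple_path E xs \<and> set xs \<subseteq> V"
  have "length xs < Suc (card V)" if "?P xs" for xs
  proof -
    have "length xs = card (set xs)" using that by (simp add: simple_path_def distinct_card)
    also have "\<dots> \<le> card V" using that card_mono[OF assms(1)] by blast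
    finally show ?thesis by simp
  qed
  then show ?thesis
    using Lattices_Big.ex_has_greatest_nat[of ?P ys0 length] assms(2,3) that by blast
qed

lemma acyclic_graph_has_leaf:
  assumes sg: "simple_graph V E" and ac: "acyclic_graph V E" and "E \<noteq> {}"
  obtains v0 v1 where "{v0, v1} \<in> E" "v0 \<noteq> v1" "\<And>w. {v0, w} \<in> E \<Longrightarrow> w = v1"
proof -
  obtain u w where "{u, w} \<in> E" "u \<in> V" "w \<in> V" "u \<noteq> w"
    using \<open>E \<noteq> {}\<close> simple_graph_edgeE[OF sg] by (metis ex_in_conv)
  then have uw: "simple_path E [u, w]" "set [u, w] \<subseteq> V"
    by (auto simp: simple_path_def adj_def less_Suc_eq)
  obtain xs where xs: "simple_path E xs" "set xs \<subseteq> V"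
    and longest: "\<And>ys. simple_path E ys \<Longrightarrow> set ys \<subseteq> V \<Longrightarrow> length ys \<le> length xs"
    using longest_simple_path[OF simple_graph_finite_vertices[OF sg] uw] by blast
  have len: "2 \<le> length xs" using longest[OF uw] by simp
  have dist: "distinct xs" and adj01: "adj E (xs ! 0) (xs ! 1)"
    using xs len by (auto simp: simple_path_def)
  txt \<open>Another neighbour of the first vertex would extend the path or close a cycle.\<close>
  have "w' = xs ! 1" if w': "{xs ! 0, w'} \<in> E" for w'
  proof (rule ccontr)
    assume "w' \<noteq> xs ! 1"
    have "w' \<noteq> xs ! 0" using simple_graph_card_edge[OF sg w'] by auto
    show False
    proof (cases "w' \<in> set xs")
      case False
      have "hd xs = xs ! 0" using len by (cases xs) auto
      then have "simple_path E (w' # xs)" "set (w' # xs) \<subseteq> V"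
        using xs w' False simple_graph_edge_subset[OF sg w']
        by (auto intro!: simple_path_Cons simp: adj_def insert_commute)
      then show False using longest[of "w' # xs"] by simp
    next
      case True
      then obtain j where j: "j < length xs" "xs ! j = w'" by (auto simp: in_set_conv_nth)
      with \<open>w' \<noteq> xs ! 0\<close> \<open>w' \<noteq> xs ! 1\<close> have "j \<noteq> 0" "j \<noteq> 1" by metis+
      then have "2 \<le> j" by linarith
      then have "is_cycle V E (take (Suc j) xs)"
        using xs j w' by (intro simple_path_close_cycle) (auto simp: adj_def insert_commute)
      then show False using ac by (auto simp: acyclic_graph_def)
    qed
  qed
  moreover have "xs ! 0 \<noteq> xs ! 1" using len by (subst nth_eq_iff_index_eq[OF dist]) auto
  moreover have "{xs ! 0, xs ! 1} \<in> E" using adj01 by (simp add: adj_def)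
  ultimately show ?thesis using that by blast
qed

lemma simple_graph_remove_leaf:
  assumes sg: "simple_graph V E" and leaf: "\<And>w. {v0, w} \<in> E \<Longrightarrow> w = v1"
  shows "simple_graph (V - {v0}) (E - {{v0, v1}})"
  unfolding simple_graph_def
proof (intro conjI ballI)
  show "finite (V - {v0})" using simple_graph_finite_vertices[OF sg] by simp
  fix f assume f: "f \<in> E - {{v0, v1}}"
  then obtain u w where uw: "f = {u, w}" "u \<in> V" "w \<in> V" "u \<noteq> w"
    using simple_graph_edgeE[OF sg] by blast
  then have "u \<noteq> v0" "w \<noteq> v0" using leaf f by (auto simp: insert_commute)
  then show "\<exists>u w. f = {u, w} \<and> u \<in> V - {v0} \<and> w \<in> V - {v0} \<and> u \<noteq> w" using uw by blast
qed

lemma connected_graph_remove_leaf: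
  assumes cn: "connected_graph V E" and v1: "v1 \<in> V" "v1 \<noteq> v0"
    and leaf: "\<And>w. {v0, w} \<in> E \<Longrightarrow> w = v1"
  shows "connected_graph (V - {v0}) (E - {{v0, v1}})"
proof -
  let ?E = "E - {{v0, v1}}"
  have reach: "(adj ?E)\<^sup>*\<^sup>* v1 z" if "(adj E)\<^sup>*\<^sup>* v1 z" "z \<noteq> v0" for z
    using that
  proof (induction rule: rtranclp_induct)
    case (step y z)
    show ?case
    proof (cases "y = v0")
      case True
      then show ?thesis using step.hyps(2) leaf by (simp add: adj_def)
    next
      case False
      then have "adj ?E y z" using step.hyps(2) step.prems by (auto simp: adj_def doubleton_eq_iff)
      moreover have "(adj ?E)\<^sup>*\<^sup>* v1 y" using step.IH False by blast
      ultimately show ?thesis by (simp add: rtranclp.rtrancl_into_rtrancl)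
    qed
  qed simp
  have "(adj ?E)\<^sup>*\<^sup>* u w" if "u \<in> V - {v0}" "w \<in> V - {v0}" for u w
  proof -
    have "(adj ?E)\<^sup>*\<^sup>* v1 u" "(adj ?E)\<^sup>*\<^sup>* v1 w"
      using cn v1 that reach by (auto simp: connected_graph_def)
    then show ?thesis
      using sympD[OF symp_rtranclp[OF symp_adj]] rtranclp_trans by metis
  qed
  then show ?thesis using v1 by (auto simp: connected_graph_def)
qed

lemma is_tree_remove_leaf:
  assumes T: "is_tree V E" and e: "{v0, v1} \<in> E" "v0 \<noteq> v1"
    and leaf: "\<And>w. {v0, w} \<in> E \<Longrightarrow> w = v1"
  shows "is_tree (V - {v0}) (E - {{v0, v1}})"
proof -
  have sg: "simple_graph V E" and cn: "connected_graph V E" and ac: "acyclic_graph V E"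
    using T by (auto simp: is_tree_def)
  have "v1 \<in> V" using simple_graph_edge_subset[OF sg e(1)] by blast
  then have "connected_graph (V - {v0}) (E - {{v0, v1}})"
    using connected_graph_remove_leaf[of V E v1 v0, OF cn _ e(2)[symmetric] leaf] by blast
  moreover have "acyclic_graph (V - {v0}) (E - {{v0, v1}})"
    using ac is_cycle_mono[of "V - {v0}" "E - {{v0, v1}}" _ V E] by (auto simp: acyclic_graph_def)
  ultimately show ?thesis
    using simple_graph_remove_leaf[OF sg leaf] by (simp add: is_tree_def)
qed

lemma connected_no_edges_card_le_1:
  assumes "finite V" "connected_graph V {}"
  shows "card V \<le> 1"
proof -
  have "a = b" if "a \<in> V" "b \<in> V" for a b
  proof -
    have "(adj {})\<^sup>*\<^sup>* a b" using assms(2) that by (auto simp: connected_graph_def)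
    then show ?thesis by (cases rule: converse_rtranclpE) (auto simp: adj_def)
  qed
  then show ?thesis using card_le_Suc0_iff_eq[OF assms(1)] by auto
qed

lemma tree_card_edges:
  assumes "is_tree V E"
  shows "card E + 1 = card V"
  using assms
proof (induction "card V" arbitrary: V E)
  case 0
  then show ?case by (auto simp: is_tree_def connected_graph_def dest: simple_graph_finite_vertices)
next
  case (Suc m)
  have sg: "simple_graph V E" and ac: "acyclic_graph V E" and cn: "connected_graph V E"
    using Suc.prems by (auto simp: is_tree_def)
  have fV: "finite V" and fE: "finite E"
    using sg simple_graph_finite_vertices simple_graph_finite_edges by auto
  show ?case
  proof (cases "E = {}")
    case True
    then have "card V \<le> 1" using connected_no_edges_card_le_1[OF fV] cn by simp
    then show ?thesis using True Suc.hyps(2) by simp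
  next
    case False
    then obtain v0 v1 where l: "{v0, v1} \<in> E" "v0 \<noteq> v1" "\<And>w. {v0, w} \<in> E \<Longrightarrow> w = v1"
      using acyclic_graph_has_leaf[OF sg ac] by blast
    have "v0 \<in> V" using simple_graph_edge_subset[OF sg l(1)] by blast
    then have "card (V - {v0}) = m" using Suc.hyps(2) fV by simp
    then have "card (E - {{v0, v1}}) + 1 = m"
      using Suc.hyps(1) is_tree_remove_leaf[OF Suc.prems l] by blast
    moreover have "card (E - {{v0, v1}}) + 1 = card E"
      using l(1) fE card_Diff1_less[OF fE l(1)] by simp
    ultimately show ?thesis using Suc.hyps(2) by simp
  qed
qed

lemma connected_deg_ge_1:
  assumes sg: "simple_graph V E" and cn: "connected_graph V E" and "2 \<le> card V" "v \<in> V"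
  shows "1 \<le> deg E v"
proof -
  have "\<not> (\<forall>a\<in>V. \<forall>b\<in>V. a = b)"
    using assms(3) card_le_Suc0_iff_eq[OF simple_graph_finite_vertices[OF sg]] by auto
  then obtain u where u: "u \<in> V" "u \<noteq> v" using assms(4) by blast
  have "(adj E)\<^sup>*\<^sup>* v u" using cn u assms(4) by (auto simp: connected_graph_def)
  then obtain y where "adj E v y"
    using u(2) by (cases rule: converse_rtranclpE) auto
  then show ?thesis
    using deg_ge_1[OF simple_graph_finite_edges[OF sg]] by (simp add: adj_def)
qed

lemma tree_two_leaves:
  assumes T: "is_tree V E" and n: "2 \<le> card V"
  obtains a b where "a \<in> V" "b \<in> V" "a \<noteq> b" "deg E a = 1" "deg E b = 1"
proof -
  have sg: "simple_graph V E" using T by (simp add: is_tree_def)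
  have fV: "finite V" using simple_graph_finite_vertices[OF sg] .
  have deg: "\<forall>v\<in>V. 1 \<le> deg E v"
    using connected_deg_ge_1[OF sg _ n] T by (auto simp: is_tree_def)
  define Z where "Z = {v\<in>V. deg E v = 1}"
  have fZ: "finite Z" "Z \<subseteq> V" using fV by (auto simp: Z_def)
  have "\<not> card Z \<le> 1"
  proof
    assume "card Z \<le> 1"
    have "card V - card Z = (\<Sum>v\<in>V - Z. 1)" using card_Diff_subset[OF fZ] by simp
    also have "\<dots> \<le> (\<Sum>v\<in>V - Z. deg E v - 1)"
      using deg by (intro sum_mono) (auto simp: Z_def)
    also have "\<dots> \<le> (\<Sum>v\<in>V. deg E v - 1)" by (rule sum_mono2) (use fV in auto)
    also have "\<dots> = card V - 2"
      using sum_deg_minus_1[OF sg deg] tree_card_edges[OF T] by simp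
    finally show False using \<open>card Z \<le> 1\<close> n by linarith
  qed
  then obtain a b where "a \<in> Z" "b \<in> Z" "a \<noteq> b"
    using card_le_Suc0_iff_eq[OF fZ(1)] by auto
  then show ?thesis using that unfolding Z_def by blast
qed

lemma tree_vertex_load_lower_bound:
  assumes T: "is_tree V E" and n: "2 \<le> card V" and x: "c_seq V E x"
  shows "3 * (card V * Suc (card V)) + 2 * (card V - 2) \<le> 2 * vertex_load V E x"
proof -
  have sg: "simple_graph V E" using T by (simp add: is_tree_def)
  have deg: "\<forall>v\<in>V. 1 \<le> deg E v"
    using connected_deg_ge_1[OF sg _ n] T by (auto simp: is_tree_def)
  have "2 * card E - card V = card V - 2" using tree_card_edges[OF T] by simp
  then show ?thesis using vertex_load_lower_bound[OF sg x deg] by simp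
qed

lemma tree_vertex_load_upper_bound:
  assumes T: "is_tree V E" and n: "2 \<le> card V"
  obtains x where "c_seq V E x"
    "2 * vertex_load V E x \<le> 3 * (card V * Suc (card V)) + (card V - 2) * (card V - 1)"
proof -
  have sg: "simple_graph V E" using T by (simp add: is_tree_def)
  have fV: "finite V" using simple_graph_finite_vertices[OF sg] .
  have deg: "\<forall>v\<in>V. 1 \<le> deg E v"
    using connected_deg_ge_1[OF sg _ n] T by (auto simp: is_tree_def)
  let ?c = "\<lambda>v. deg E v - 1"
  obtain a b where ab: "a \<in> V" "b \<in> V" "a \<noteq> b" "deg E a = 1" "deg E b = 1"
    by (rule tree_two_leaves[OF T n])
  define A where "A = V - {a, b}"
  have fA: "finite A" using fV by (simp add: A_def)
  have "Suc (card A) = card V - 1" using ab fV n by (simp add: A_def card_Diff_subset)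
  moreover have "(\<Sum>v\<in>A. ?c v) = card V - 2"
  proof -
    have "(\<Sum>v\<in>A. ?c v) = (\<Sum>v\<in>V. ?c v)"
      using ab by (intro sum.mono_neutral_left[OF fV]) (auto simp: A_def)
    then show ?thesis using sum_deg_minus_1[OF sg deg] tree_card_edges[OF T] by simp
  qed
  moreover obtain ws where ws: "distinct ws" "set ws = A"
    "2 * (\<Sum>j<length ws. ?c (ws ! j) * Suc j) \<le> (\<Sum>v\<in>A. ?c v) * Suc (card A)"
    by (rule exists_ordering_chebyshev[OF fA])
  txt \<open>The leaves have weight \<open>deg - 1 = 0\<close>, so putting them last costs nothing.\<close>
  define vs where "vs = ws @ [a, b]"
  have vs: "distinct vs" "set vs = V" using ws ab by (auto simp: vs_def A_def)
  have "(\<Sum>j<length vs. ?c (vs ! j) * Suc j) = (\<Sum>j<length ws. ?c (ws ! j) * Suc j)"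
  proof -
    have "(\<Sum>j<length ws. ?c (vs ! j) * Suc j) = (\<Sum>j<length ws. ?c (ws ! j) * Suc j)"
      by (rule sum.cong) (auto simp: vs_def nth_append)
    then show ?thesis using ab by (simp add: vs_def nth_append)
  qed
  ultimately have "2 * (\<Sum>j<length vs. ?c (vs ! j) * Suc j) \<le> (card V - 2) * (card V - 1)"
    using ws(3) by simp
  moreover obtain x where "c_seq V E x" "\<And>j. j < length vs \<Longrightarrow> pos V E x (Inl (vs ! j)) = Suc j"
    using vertices_first_c_seq[OF sg vs] by blast
  ultimately show ?thesis
    using that vertex_load_vertices_first[OF deg vs] by fastforce
qed

section \<open>Paths and stars\<close>

lemma simple_graph_path_edges: "simple_graph {0..<n} (path_edges n)"
  unfolding simple_graph_def path_edges_def
proof (intro conjI ballI)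
  fix e assume "e \<in> {{i, Suc i} | i. Suc i < n}"
  then obtain i where "e = {i, Suc i}" "Suc i < n" by blast
  then show "\<exists>u w. e = {u, w} \<and> u \<in> {0..<n} \<and> w \<in> {0..<n} \<and> u \<noteq> w"
    by (intro exI[of _ i] exI[of _ "Suc i"]) auto
qed simp

lemma card_path_edges: "card (path_edges n) = n - 1"
proof -
  have "path_edges n = (\<lambda>i. {i, Suc i}) ` {0..<n - 1}" by (auto simp: path_edges_def)
  moreover have "inj_on (\<lambda>i. {i, Suc i}) {0..<n - 1}" by (auto simp: inj_on_def doubleton_eq_iff)
  ultimately show ?thesis by (simp add: card_image)
qed

lemma path_edgeI:
  assumes "Suc i < n"
  shows "{i, Suc i} \<in> path_edges n"
  unfolding path_edges_def using assms by (intro CollectI exI[of _ i]) simp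

lemma path_deg_ge_1:
  assumes "2 \<le> n" "v < n"
  shows "1 \<le> deg (path_edges n) v"
proof -
  have fE: "finite (path_edges n)" by (rule simple_graph_finite_edges[OF simple_graph_path_edges])
  show ?thesis
  proof (cases "Suc v < n")
    case True
    then have "{v, Suc v} \<in> path_edges n" by (rule path_edgeI)
    then show ?thesis using deg_ge_1[OF fE] by simp
  next
    case False
    then have v: "Suc (v - 1) = v" using assms by simp
    then have "{v - 1, v} \<in> path_edges n" using path_edgeI[of "v - 1" n] assms by simp
    then show ?thesis using deg_ge_1[OF fE] by simp
  qed
qed

lemma path_deg_inner:
  assumes "0 < v" "Suc v < n"
  shows "2 \<le> deg (path_edges n) v"
proof -
  obtain u where v: "v = Suc u" using assms(1) gr0_implies_Suc by blast
  have "{u, v} \<in> path_edges n" "{v, Suc v} \<in> path_edges n"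
    using assms unfolding v by (auto intro: path_edgeI)
  then have "{{u, v}, {v, Suc v}} \<subseteq> {e\<in>path_edges n. v \<in> e}" by blast
  moreover have "finite {e\<in>path_edges n. v \<in> e}"
    using simple_graph_finite_edges[OF simple_graph_path_edges] by simp
  moreover have "card {{u, v}, {v, Suc v}} = 2" using v by (simp add: doubleton_eq_iff)
  ultimately show ?thesis
    unfolding deg_def by (metis card_mono)
qed

lemma path_vertex_load_lower_bound:
  assumes n: "2 \<le> n" and x: "c_seq {0..<n} (path_edges n) x"
  shows "3 * (n * Suc n) + (n - 2) * (n - 1) \<le> 2 * vertex_load {0..<n} (path_edges n) x"
proof -
  let ?E = "path_edges n" and ?p = "\<lambda>v. pos {0..<n} (path_edges n) x (Inl v)"
  have deg: "\<forall>v\<in>{0..<n}. 1 \<le> deg ?E v" using path_deg_ge_1[OF n] by simp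
  have "n * Suc n \<le> 2 * (\<Sum>v\<in>{0..<n}. ?p v)"
    using c_seq_twice_sum_vertex_pos_ge[OF x, of "{0..<n}"] by simp
  moreover have "(n - 2) * (n - 1) \<le> 2 * (\<Sum>v\<in>{0..<n}. (deg ?E v - 1) * ?p v)"
  proof -
    obtain m where m: "n = Suc (Suc m)" using n by (metis add_2_eq_Suc le_Suc_ex)
    then have "(n - 2) * (n - 1) \<le> 2 * (\<Sum>v\<in>{1..<n - 1}. ?p v)"
      using c_seq_twice_sum_vertex_pos_ge[OF x, of "{1..<n - 1}"] by simp
    also have "(\<Sum>v\<in>{1..<n - 1}. ?p v) \<le> (\<Sum>v\<in>{1..<n - 1}. (deg ?E v - 1) * ?p v)"
    proof (intro sum_mono)
      fix v assume "v \<in> {1..<n - 1}"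
      then have "0 < v" "Suc v < n" by auto
      then have "1 \<le> deg ?E v - 1" using path_deg_inner[of v n] by simp
      then show "?p v \<le> (deg ?E v - 1) * ?p v" by simp
    qed
    also have "\<dots> \<le> (\<Sum>v\<in>{0..<n}. (deg ?E v - 1) * ?p v)"
      by (rule sum_mono2) auto
    finally show ?thesis by simp
  qed
  ultimately show ?thesis using vertex_load_split[OF deg, of x] by linarith
qed

lemma simple_graph_star_edges: "simple_graph {0..<n} (star_edges n)"
  unfolding simple_graph_def star_edges_def
proof (intro conjI ballI)
  fix e assume "e \<in> {{0, i} | i. 1 \<le> i \<and> i < n}"
  then obtain i where "e = {0, i}" "1 \<le> i" "i < n" by blast
  then show "\<exists>u w. e = {u, w} \<and> u \<in> {0..<n} \<and> w \<in> {0..<n} \<and> u \<noteq> w"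
    by (intro exI[of _ 0] exI[of _ i]) auto
qed simp

lemma card_star_edges: "card (star_edges n) = n - 1"
proof -
  have "star_edges n = (\<lambda>i. {0, i}) ` {1..<n}" by (auto simp: star_edges_def)
  moreover have "inj_on (\<lambda>i. {0::nat, i}) {1..<n}" by (auto simp: inj_on_def doubleton_eq_iff)
  ultimately show ?thesis by (simp add: card_image)
qed

lemma star_deg_hub: "deg (star_edges n) 0 = n - 1"
proof -
  have "{e\<in>star_edges n. 0 \<in> e} = star_edges n" by (auto simp: star_edges_def)
  then show ?thesis by (simp add: deg_def card_star_edges)
qed

lemma star_deg_leaf: "1 \<le> j \<Longrightarrow> j < n \<Longrightarrow> deg (star_edges n) j = 1"
proof -
  assume "1 \<le> j" "j < n"
  then have "{e\<in>star_edges n. j \<in> e} = {{0, j}}" by (auto simp: star_edges_def)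
  then show ?thesis by (simp add: deg_def)
qed

lemma star_vertex_load_upper_bound:
  assumes n: "2 \<le> n"
  obtains x where "c_seq {0..<n} (star_edges n) x"
    "2 * vertex_load {0..<n} (star_edges n) x \<le> 3 * (n * Suc n) + 2 * (n - 2)"
proof -
  let ?E = "star_edges n"
  have deg: "\<forall>v\<in>{0..<n}. 1 \<le> deg ?E v"
  proof
    fix v assume "v \<in> {0..<n}"
    then show "1 \<le> deg ?E v"
      using n star_deg_hub[of n] star_deg_leaf[of v n] by (cases "v = 0") auto
  qed
  obtain m where m: "n = Suc m" using n by (cases n) auto
  have "(\<Sum>j<length [0..<n]. (deg ?E ([0..<n] ! j) - 1) * Suc j) = n - 2"
  proof -
    have "(\<Sum>j<length [0..<n]. (deg ?E ([0..<n] ! j) - 1) * Suc j) = (\<Sum>j<n. (deg ?E j - 1) * Suc j)"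
      by (intro sum.cong) auto
    also have "\<dots> = (deg ?E 0 - 1) * 1 + (\<Sum>j<m. (deg ?E (Suc j) - 1) * Suc (Suc j))"
      unfolding m by (subst sum.lessThan_Suc_shift) simp
    also have "(\<Sum>j<m. (deg ?E (Suc j) - 1) * Suc (Suc j)) = 0"
      using star_deg_leaf[of _ n] m by (intro sum.neutral) auto
    finally show ?thesis by (simp add: star_deg_hub)
  qed
  moreover obtain x where "c_seq {0..<n} ?E x"
    "\<And>j. j < length [0..<n] \<Longrightarrow> pos {0..<n} ?E x (Inl ([0..<n] ! j)) = Suc j"
    using vertices_first_c_seq[OF simple_graph_star_edges, of "[0..<n]"] by auto
  ultimately show ?thesis
    using that vertex_load_vertices_first[OF deg, of "[0..<n]"] by fastforce
qed

section \<open>Path and star as extremal trees\<close>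

lemma nu_star_path_le_tree:
  assumes T: "is_tree V E" and n: "card V = n" "2 \<le> n"
  shows "nu_star {0..<n} (path_edges n) \<le> nu_star V E"
proof -
  have sg: "simple_graph V E" using T by (simp add: is_tree_def)
  obtain x where "c_seq V E x" "2 * vertex_load V E x \<le> 3 * (n * Suc n) + (n - 2) * (n - 1)"
    using tree_vertex_load_upper_bound[OF T] n by blast
  moreover have "card {0..<n} + card (path_edges n) = card V + card E"
    using tree_card_edges[OF T] n by (simp add: card_path_edges)
  ultimately show ?thesis
    using nu_star_le_by_vertex_load[OF simple_graph_path_edges sg] path_vertex_load_lower_bound n
    by blast
qed

lemma nu_star_tree_le_star:
  assumes T: "is_tree V E" and n: "card V = n" "2 \<le> n"
  shows "nu_star V E \<le> nu_star {0..<n} (star_edges n)"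
proof -
  have sg: "simple_graph V E" using T by (simp add: is_tree_def)
  obtain x where "c_seq {0..<n} (star_edges n) x"
    "2 * vertex_load {0..<n} (star_edges n) x \<le> 3 * (n * Suc n) + 2 * (n - 2)"
    using star_vertex_load_upper_bound n by blast
  moreover have "card V + card E = card {0..<n} + card (star_edges n)"
    using tree_card_edges[OF T] n by (simp add: card_star_edges)
  ultimately show ?thesis
    using nu_star_le_by_vertex_load[OF sg simple_graph_star_edges] tree_vertex_load_lower_bound[OF T] n
    by blast
qed

theorem theorem4:
  fixes V :: "'a set" and E :: "'a set set" and n :: nat
  assumes "is_tree V E" and "card V = n"
  shows "nu_star {0..<n} (path_edges n) \<le> nu_star V E \<and> nu_star V E \<le> nu_star {0..<n} (star_edges n)"
proof (cases "n = 1")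
  case True
  have sg: "simple_graph V E" using assms(1) by (simp add: is_tree_def)
  have "E = {}" "path_edges n = {}" "star_edges n = {}"
    using tree_card_edges[OF assms(1)] assms(2) True simple_graph_finite_edges[OF sg]
    by (auto simp: path_edges_def star_edges_def)
  then show ?thesis
    using sg simple_graph_path_edges[of n] simple_graph_star_edges[of n]
    by (simp add: nu_star_no_edges)
next
  case False
  then have "2 \<le> n" using tree_card_edges[OF assms(1)] assms(2) by linarith
  then show ?thesis
    using nu_star_path_le_tree nu_star_tree_le_star assms by blast
qed

end
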